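(* In the contention game with $k=2$ channels under acknowledgement-based feedback and $2\le n\le4$ players, let all players other than $i$ use $f^2$, and let player $i$ use any protocol $r_i\notin\mathcal G^{f^2}$. Then the expected latency of player $i$ under the profile $(f^2_{-i},r_i)$ is at least $2^n/n$.
   Context: Contention game: $n$ players, channels $K=\{1,\dots,k\}$, slots $t=1,2,\dots$; each player has one packet, initially pending; in each slot a pending player chooses (possibly randomly) an action in $\{0,1,\dots,k\}$ ($0$ = idle, $a$ = transmit on channel $a$); a lone transmitter on a channel succeeds and leaves, colliding transmitters remain pending. Latency = slot of successful transmission. Acknowledgement-based: decision rules depend only on the personal action history; only transmitters learn whether they succeeded. $f^2$ is the protocol that in every slot, regardless of history, transmits on each of the two channels with probability $1/2$ and never idles. For $\tau^*\ge1$ and a personal history $h_{i,\tau^*}=(a_{i,1},\dots,a_{i,\tau^*})$, $g_i(h_{i,\tau^*})$ is the protocol playing $a_{i,t}$ with probability $1$ for $1\le t\le\tau^*$ and following $f^2$ for $t>\tau^*$. $\mathcal G^{f^2}$ is the set of all such $g_i(h_{i,\tau^*})$, over all $\tau^*\ge1$, for which $h_{i,\tau^*}$ occurs with positive probability when all players use $f^2$. *)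

theory Defs
  imports "HOL-Probability.Probability"
begin

text \<open>Actions are natural numbers: 0 = idle, a \<ge> 1 = transmit on channel a.
  A protocol (decision rule) maps the personal action history (the list of own actions
  in slots 1..t-1) to a distribution over the action in slot t.\<close>

type_synonym protocol = "nat list \<Rightarrow> nat pmf"

definition valid_protocol :: "nat \<Rightarrow> protocol \<Rightarrow> bool" where
  "valid_protocol k f \<longleftrightarrow> (\<forall>h. set_pmf (f h) \<subseteq> {0..k})"

record gstate =
  pending :: "nat set"
  hist :: "nat \<Rightarrow> nat list"
  lat :: "nat \<Rightarrow> nat option"

definition init_state :: "nat \<Rightarrow> gstate" where
  "init_state n = \<lparr>pending = {0..<n}, hist = (\<lambda>_. []), lat = (\<lambda>_. None)\<rparr>"

definition update :: "nat \<Rightarrow> gstate \<Rightarrow> (nat \<Rightarrow> nat) \<Rightarrow> gstate" where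
  "update t s a =
    (let P = pending s;
         P' = {j \<in> P. a j = 0 \<or> (\<exists>j'\<in>P. j' \<noteq> j \<and> a j' = a j)}
     in \<lparr>pending = P',
         hist = (\<lambda>j. if j \<in> P then hist s j @ [a j] else hist s j),
         lat = (\<lambda>j. if j \<in> P \<and> j \<notin> P' then Some t else lat s j)\<rparr>)"

definition step :: "(nat \<Rightarrow> protocol) \<Rightarrow> nat \<Rightarrow> gstate \<Rightarrow> gstate pmf" where
  "step prof t s = map_pmf (update t s) (Pi_pmf (pending s) 0 (\<lambda>j. prof j (hist s j)))"

fun game_dist :: "nat \<Rightarrow> (nat \<Rightarrow> protocol) \<Rightarrow> nat \<Rightarrow> gstate pmf" where
  "game_dist n prof 0 = return_pmf (init_state n)"
| "game_dist n prof (Suc t) = bind_pmf (game_dist n prof t) (step prof (Suc t))"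

definition lat_prob :: "nat \<Rightarrow> (nat \<Rightarrow> protocol) \<Rightarrow> nat \<Rightarrow> nat \<Rightarrow> real" where
  "lat_prob n prof i t = measure_pmf.prob (game_dist n prof t) {s. lat s i = Some t}"

definition expected_latency :: "nat \<Rightarrow> (nat \<Rightarrow> protocol) \<Rightarrow> nat \<Rightarrow> ennreal" where
  "expected_latency n prof i =
    (if (\<Sum>t. ennreal (lat_prob n prof i t)) = 1
     then (\<Sum>t. ennreal (real t * lat_prob n prof i t))
     else \<infinity>)"

definition f2 :: protocol where
  "f2 = (\<lambda>h. pmf_of_set {1, 2})"

definition g_prot :: "nat list \<Rightarrow> protocol" where
  "g_prot h = (\<lambda>h'. if length h' < length h then return_pmf (h ! length h') else f2 h')"

definition G_f2 :: "nat \<Rightarrow> nat \<Rightarrow> protocol set" where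
  "G_f2 n i = {g_prot h | h. h \<noteq> [] \<and>
      measure_pmf.prob (game_dist n (\<lambda>_. f2) (length h)) {s. hist s i = h} > 0}"

end

theory Submission
  imports Defs
begin

text \<open>Since f2 ignores the history, while player i is pending together with m other pending
  players these act as independent fair coins on the two channels.  For m \<le> 3 a finite check
  gives a one-slot Bellman inequality: whatever i does, one slot plus the bound for the number of
  players still pending with i is, in expectation, at least the bound for m.  So the potential
  t + latency_bound m after t slots is dominated in expectation by its value one slot later plus
  the latency realised in between, and telescoping shows that the expected latency of i is at least
  latency_bound (n - 1) = 2^n / n for every protocol of i.\<close>

abbreviation coin :: "nat pmf" where
  "coin \<equiv> pmf_of_set {1, 2}"

definition survivors :: "nat set \<Rightarrow> (nat \<Rightarrow> nat) \<Rightarrow> nat set" where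
  "survivors P a = {j \<in> P. a j = 0 \<or> (\<exists>j'\<in>P. j' \<noteq> j \<and> a j' = a j)}"

lemma survivors_subset: "survivors P a \<subseteq> P"
  by (auto simp: survivors_def)

lemma survivors_set:
  "survivors (set xs) a = set (filter (\<lambda>j. a j = 0 \<or> (\<exists>j'\<in>set xs. j' \<noteq> j \<and> a j' = a j)) xs)"
  by (auto simp: survivors_def)

text \<open>latency_bound m is the expected latency of a player among m + 1 players that all use f2,
  which is 2^(m+1) / (m+1) for 1 \<le> m \<le> 3; larger m never occur.\<close>

definition latency_bound :: "nat \<Rightarrow> real" where
  "latency_bound m = (if m = 0 then 1 else if m = 1 then 2 else if m = 2 then 8/3 else 4)"

definition slot_value :: "nat set \<Rightarrow> nat \<Rightarrow> (nat \<Rightarrow> nat) \<Rightarrow> real" where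
  "slot_value P i a =
    1 + (if i \<in> survivors P a then latency_bound (card (survivors P a) - 1) else 0)"

lemma latency_bound_nonneg: "0 \<le> latency_bound m"
  by (simp add: latency_bound_def)

lemma latency_bound_le_4: "latency_bound m \<le> 4"
  by (simp add: latency_bound_def)

lemma slot_value_nonneg: "0 \<le> slot_value P i a"
  by (simp add: slot_value_def latency_bound_nonneg)

fun coin_avg :: "nat list \<Rightarrow> ((nat \<Rightarrow> nat) \<Rightarrow> real) \<Rightarrow> real" where
  "coin_avg [] g = g (\<lambda>_. 0)"
| "coin_avg (j # js) g =
    (coin_avg js (\<lambda>b. g (b(j := 1))) + coin_avg js (\<lambda>b. g (b(j := 2)))) / 2"

lemma coin_avg_nonneg: "(\<And>a. 0 \<le> g a) \<Longrightarrow> 0 \<le> coin_avg js g"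
  by (induction js arbitrary: g) auto

lemma nn_integral_Pi_pmf_coin:
  assumes "distinct js" "\<And>a. 0 \<le> g a"
  shows "(\<integral>\<^sup>+a. ennreal (g a) \<partial>Pi_pmf (set js) 0 (\<lambda>_. coin)) = ennreal (coin_avg js g)"
  using assms
proof (induction js arbitrary: g)
  case Nil
  then show ?case by simp
next
  case (Cons j js)
  have "(\<integral>\<^sup>+a. ennreal (g a) \<partial>Pi_pmf (set (j # js)) 0 (\<lambda>_. coin)) =
     (\<integral>\<^sup>+y. \<integral>\<^sup>+b. ennreal (g (b(j:=y))) \<partial>Pi_pmf (set js) 0 (\<lambda>_. coin) \<partial>coin)"
    using Cons.prems by (simp add: Pi_pmf_insert nn_integral_pair_pmf')
  also have "\<dots> = (ennreal (coin_avg js (\<lambda>b. g (b(j := 1))))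
      + ennreal (coin_avg js (\<lambda>b. g (b(j := 2))))) / 2"
    using Cons by (simp add: nn_integral_pmf_of_set)
  also have "\<dots> = ennreal (coin_avg (j # js) g)"
    using Cons.prems
    by (simp add: coin_avg_nonneg ennreal_plus[symmetric] ennreal_divide_numeral del: ennreal_plus)
  finally show ?case .
qed

lemma slot_value_set:
  assumes "distinct xs"
  shows "slot_value (set xs) i a =
    (let ys = filter (\<lambda>j. a j = 0 \<or> (\<exists>j'\<in>set xs. j' \<noteq> j \<and> a j' = a j)) xs
     in 1 + (if i \<in> set ys then latency_bound (length ys - 1) else 0))"
  using assms by (simp add: slot_value_def survivors_set distinct_card Let_def del: set_filter)

lemma bellman_explicit:
  assumes "distinct (i # js)" "length js \<le> 3" "y \<in> {0, 1, 2}"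
  shows "latency_bound (length js) \<le> coin_avg js (\<lambda>b. slot_value (set (i # js)) i (b(i := y)))"
proof -
  consider "js = []" | j1 where "js = [j1]" | j1 j2 where "js = [j1, j2]"
    | j1 j2 j3 where "js = [j1, j2, j3]"
    using assms(2) by (auto simp: length_Suc_conv numeral_3_eq_3 numeral_2_eq_2 le_Suc_eq)
  then show ?thesis
  proof cases
    case 1
    show ?thesis
      using assms(3) unfolding slot_value_set[OF assms(1)] unfolding 1 coin_avg.simps
      by (elim insertE emptyE) (simp_all add: latency_bound_def)
  next
    case (2 j1)
    with assms(1) have neq: "i \<noteq> j1" by simp
    then show ?thesis
      using assms(3) neq[symmetric] unfolding slot_value_set[OF assms(1)] unfolding 2 coin_avg.simps
      by (elim insertE emptyE) (simp_all add: latency_bound_def)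
  next
    case (3 j1 j2)
    with assms(1) have neq: "i \<noteq> j1" "i \<noteq> j2" "j1 \<noteq> j2" by auto
    then show ?thesis
      using assms(3) neq[symmetric] unfolding slot_value_set[OF assms(1)] unfolding 3 coin_avg.simps
      by (elim insertE emptyE) (simp_all add: latency_bound_def)
  next
    case (4 j1 j2 j3)
    with assms(1) have neq: "i \<noteq> j1" "i \<noteq> j2" "i \<noteq> j3" "j1 \<noteq> j2" "j1 \<noteq> j3" "j2 \<noteq> j3"
      by auto
    then show ?thesis
      using assms(3) neq[symmetric] unfolding slot_value_set[OF assms(1)] unfolding 4 coin_avg.simps
      by (elim insertE emptyE) (simp_all add: latency_bound_def)
  qed
qed

lemma bellman_inequality:
  assumes "finite P" "i \<in> P" "card P \<le> 4" "set_pmf d \<subseteq> {0..2}"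
  shows "ennreal (latency_bound (card P - 1)) \<le>
    (\<integral>\<^sup>+a. ennreal (slot_value P i a) \<partial>Pi_pmf P 0 (\<lambda>j. if j = i then d else coin))"
proof -
  obtain js where js: "set js = P - {i}" "distinct js"
    using finite_distinct_list[of "P - {i}"] assms(1) by auto
  have P: "P = insert i (set js)" and i: "i \<notin> set js" and dist: "distinct (i # js)"
    using js assms(2) by auto
  have len: "length js = card P - 1"
    using js assms(1,2) by (simp add: distinct_card[symmetric])
  have "ennreal (latency_bound (card P - 1)) \<le> (\<integral>\<^sup>+y. ennreal (latency_bound (card P - 1)) \<partial>d)"
    by simp
  also have "\<dots> \<le>
      (\<integral>\<^sup>+y. \<integral>\<^sup>+b. ennreal (slot_value P i (b(i := y))) \<partial>Pi_pmf (set js) 0 (\<lambda>_. coin) \<partial>d)"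
  proof (rule nn_integral_mono_AE, rule AE_pmfI)
    fix y assume "y \<in> set_pmf d"
    then have "y \<in> {0, 1, 2}"
      using assms(4) by auto
    then have "latency_bound (card P - 1) \<le> coin_avg js (\<lambda>b. slot_value P i (b(i := y)))"
      using bellman_explicit[OF dist] assms(3) len P by simp
    also have "ennreal (coin_avg js (\<lambda>b. slot_value P i (b(i := y)))) =
        (\<integral>\<^sup>+b. ennreal (slot_value P i (b(i := y))) \<partial>Pi_pmf (set js) 0 (\<lambda>_. coin))"
      by (rule nn_integral_Pi_pmf_coin[OF js(2), symmetric]) (rule slot_value_nonneg)
    finally show "ennreal (latency_bound (card P - 1)) \<le> \<dots>"
      by (simp add: ennreal_leI)
  qed
  also have "\<dots> =
      (\<integral>\<^sup>+a. ennreal (slot_value P i a) \<partial>Pi_pmf P 0 (\<lambda>j. if j = i then d else coin))"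
  proof -
    have "Pi_pmf (set js) 0 (\<lambda>j. if j = i then d else coin) = Pi_pmf (set js) 0 (\<lambda>_. coin)"
      using i by (intro Pi_pmf_cong) auto
    then show ?thesis
      unfolding P using i by (simp add: Pi_pmf_insert nn_integral_pair_pmf')
  qed
  finally show ?thesis .
qed

lemma update_pending [simp]: "pending (update t s a) = survivors (pending s) a"
  by (simp add: update_def survivors_def Let_def)

lemma update_lat [simp]:
  "lat (update t s a) j =
    (if j \<in> pending s \<and> j \<notin> survivors (pending s) a then Some t else lat s j)"
  by (simp add: update_def survivors_def Let_def)

lemma set_pmf_game_dist_SucE:
  assumes "s \<in> set_pmf (game_dist n prof (Suc t))"
  obtains s0 a where "s0 \<in> set_pmf (game_dist n prof t)" "s = update (Suc t) s0 a"
  using assms by (auto simp: step_def)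

lemma pending_subset_game_dist:
  "s \<in> set_pmf (game_dist n prof t) \<Longrightarrow> pending s \<subseteq> {0..<n}"
proof (induction t arbitrary: s)
  case 0
  then show ?case by (simp add: init_state_def)
next
  case (Suc t)
  then show ?case
    by (elim set_pmf_game_dist_SucE) (use survivors_subset in fastforce)
qed

lemma lat_le_game_dist:
  "s \<in> set_pmf (game_dist n prof t) \<Longrightarrow> lat s j = Some u \<Longrightarrow> u \<le> t"
proof (induction t arbitrary: s)
  case 0
  then show ?case by (simp add: init_state_def)
next
  case (Suc t)
  obtain s0 a where "s0 \<in> set_pmf (game_dist n prof t)" "s = update (Suc t) s0 a"
    using Suc.prems(1) by (rule set_pmf_game_dist_SucE)
  then show ?case
    using Suc by (auto split: if_splits intro: le_SucI)
qed

lemma lat_prob_0: "lat_prob n prof i 0 = 0"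
  by (simp add: lat_prob_def init_state_def)

lemma nn_integral_game_dist_Suc:
  "(\<integral>\<^sup>+s'. f s' \<partial>game_dist n prof (Suc t)) =
   (\<integral>\<^sup>+s. \<integral>\<^sup>+s'. f s' \<partial>step prof (Suc t) s \<partial>game_dist n prof t)"
  by (simp add: nn_integral_bind_pmf)

lemma game_dist_telescope:
  fixes F g :: "nat \<Rightarrow> gstate \<Rightarrow> ennreal"
  assumes "\<And>t s. s \<in> set_pmf (game_dist n prof t) \<Longrightarrow>
    F t s \<le> (\<integral>\<^sup>+s'. g (Suc t) s' + F (Suc t) s' \<partial>step prof (Suc t) s)"
  shows "F 0 (init_state n) \<le>
    (\<Sum>u\<in>{1..T}. \<integral>\<^sup>+s. g u s \<partial>game_dist n prof u) + (\<integral>\<^sup>+s. F T s \<partial>game_dist n prof T)"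
proof (induction T)
  case 0
  then show ?case by simp
next
  case (Suc T)
  have "(\<integral>\<^sup>+s. F T s \<partial>game_dist n prof T) \<le>
      (\<integral>\<^sup>+s. \<integral>\<^sup>+s'. g (Suc T) s' + F (Suc T) s' \<partial>step prof (Suc T) s \<partial>game_dist n prof T)"
    by (intro nn_integral_mono_AE AE_pmfI assms)
  also have "\<dots> = (\<integral>\<^sup>+s. g (Suc T) s \<partial>game_dist n prof (Suc T))
      + (\<integral>\<^sup>+s. F (Suc T) s \<partial>game_dist n prof (Suc T))"
    unfolding nn_integral_game_dist_Suc[symmetric] by (rule nn_integral_add) simp_all
  finally show ?case
    using Suc.IH by (simp add: add.assoc add_left_mono order_trans)
qed

definition pending_prob :: "nat \<Rightarrow> (nat \<Rightarrow> protocol) \<Rightarrow> nat \<Rightarrow> nat \<Rightarrow> real" where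
  "pending_prob n prof i t = measure_pmf.prob (game_dist n prof t) {s. i \<in> pending s}"

lemma pending_prob_Suc:
  "pending_prob n prof i (Suc t) + lat_prob n prof i (Suc t) = pending_prob n prof i t"
proof -
  let ?A = "{s. i \<in> pending s}" and ?L = "{s. lat s i = Some (Suc t)}"
  have one_slot: "(\<integral>\<^sup>+s'. indicator ?A s' + indicator ?L s' \<partial>step prof (Suc t) s) = indicator ?A s"
    if "s \<in> set_pmf (game_dist n prof t)" for s
  proof -
    have "lat s i \<noteq> Some (Suc t)"
      using lat_le_game_dist[OF that] by fastforce
    then have "indicator ?A (update (Suc t) s a) + indicator ?L (update (Suc t) s a)
        = (indicator ?A s :: ennreal)" for a
      using survivors_subset by (auto simp: indicator_def)
    then show ?thesis
      by (simp add: step_def)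
  qed
  have "ennreal (pending_prob n prof i (Suc t) + lat_prob n prof i (Suc t)) =
      (\<integral>\<^sup>+s'. indicator ?A s' + indicator ?L s' \<partial>game_dist n prof (Suc t))"
    by (simp add: pending_prob_def lat_prob_def nn_integral_add ennreal_plus
        measure_pmf.emeasure_eq_measure[symmetric])
  also have "\<dots> = (\<integral>\<^sup>+s. indicator ?A s \<partial>game_dist n prof t)"
    unfolding nn_integral_game_dist_Suc by (intro nn_integral_cong_AE AE_pmfI one_slot)
  also have "\<dots> = ennreal (pending_prob n prof i t)"
    by (simp add: pending_prob_def measure_pmf.emeasure_eq_measure)
  finally show ?thesis
    by (rule ennreal_inj[THEN iffD1, rotated 2]) (simp_all add: pending_prob_def lat_prob_def)
qed

lemma pending_prob_add_lat_prob:
  assumes "i < n"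
  shows "pending_prob n prof i T + (\<Sum>u\<in>{1..T}. lat_prob n prof i u) = 1"
proof (induction T)
  case 0
  then show ?case using assms by (simp add: pending_prob_def init_state_def)
next
  case (Suc T)
  then show ?case using pending_prob_Suc[of n prof i T] by simp
qed

abbreviation f2_profile :: "nat \<Rightarrow> protocol \<Rightarrow> nat \<Rightarrow> protocol" where
  "f2_profile i r \<equiv> (\<lambda>j. if j = i then r else f2)"

lemma step_f2_profile:
  "step (f2_profile i r) t s =
    map_pmf (update t s) (Pi_pmf (pending s) 0 (\<lambda>j. if j = i then r (hist s i) else coin))"
proof -
  have "(\<lambda>j. f2_profile i r j (hist s j)) = (\<lambda>j. if j = i then r (hist s i) else coin)"
    by (auto simp: f2_def)
  then show ?thesis
    by (simp add: step_def)
qed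

definition potential :: "nat \<Rightarrow> nat \<Rightarrow> gstate \<Rightarrow> real" where
  "potential i t s = (if i \<in> pending s then real t + latency_bound (card (pending s) - 1) else 0)"

lemma potential_nonneg: "0 \<le> potential i t s"
  by (simp add: potential_def latency_bound_nonneg)

lemma slot_value_update:
  assumes "i \<in> pending s" "lat s i \<noteq> Some (Suc t)"
  shows "real t + slot_value (pending s) i a =
    real (Suc t) * indicator {s'. lat s' i = Some (Suc t)} (update (Suc t) s a)
      + potential i (Suc t) (update (Suc t) s a)"
  using assms by (simp add: slot_value_def potential_def indicator_def)

lemma potential_le_step:
  assumes r: "valid_protocol 2 r" and n: "n \<le> 4"
    and s: "s \<in> set_pmf (game_dist n (f2_profile i r) t)"
  shows "ennreal (potential i t s) \<le>
    (\<integral>\<^sup>+s'. ennreal (real (Suc t) * indicator {s'. lat s' i = Some (Suc t)} s')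
      + ennreal (potential i (Suc t) s') \<partial>step (f2_profile i r) (Suc t) s)"
proof (cases "i \<in> pending s")
  case False
  then show ?thesis by (simp add: potential_def)
next
  case True
  let ?P = "pending s" and ?M = "Pi_pmf (pending s) 0 (\<lambda>j. if j = i then r (hist s i) else coin)"
  have sub: "?P \<subseteq> {0..<n}"
    using pending_subset_game_dist[OF s] .
  have "ennreal (potential i t s) = ennreal (real t) + ennreal (latency_bound (card ?P - 1))"
    using True by (simp add: potential_def latency_bound_nonneg)
  also have "\<dots> \<le> ennreal (real t) + (\<integral>\<^sup>+a. ennreal (slot_value ?P i a) \<partial>?M)"
    using r unfolding valid_protocol_def
    by (intro add_left_mono bellman_inequality True finite_subset[OF sub])
      (use card_mono[OF _ sub] n in auto)
  also have "\<dots> = (\<integral>\<^sup>+a. ennreal (real t + slot_value ?P i a) \<partial>?M)"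
    by (simp add: nn_integral_add slot_value_nonneg measure_pmf.emeasure_space_1)
  also have "\<dots> = (\<integral>\<^sup>+s'. ennreal (real (Suc t) * indicator {s'. lat s' i = Some (Suc t)} s')
      + ennreal (potential i (Suc t) s') \<partial>step (f2_profile i r) (Suc t) s)"
  proof -
    have lat: "lat s i \<noteq> Some (Suc t)"
      using lat_le_game_dist[OF s, of i "Suc t"] by auto
    show ?thesis
      unfolding step_f2_profile nn_integral_map_pmf slot_value_update[OF True lat]
      by (simp add: potential_nonneg)
  qed
  finally show ?thesis .
qed

lemma nn_integral_measure_pmf_scaled_indicator:
  assumes "0 \<le> c"
  shows "(\<integral>\<^sup>+x. ennreal (c * indicator A x) \<partial>measure_pmf M) = ennreal (c * measure_pmf.prob M A)"
  using assms
  by (simp add: ennreal_mult ennreal_indicator nn_integral_cmult_indicator measure_pmf.emeasure_eq_measure)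

lemma latency_bound_le_truncated_mean:
  assumes r: "valid_protocol 2 r" and n: "n \<le> 4" and i: "i < n"
  defines "p \<equiv> lat_prob n (f2_profile i r) i"
  shows "latency_bound (n - 1) \<le> (\<Sum>t\<le>T. real t * p t) + (real T + 4) * (1 - (\<Sum>t\<le>T. p t))"
proof -
  let ?G = "game_dist n (f2_profile i r)"
  define q where "q = pending_prob n (f2_profile i r) i T"
  have nonneg: "0 \<le> (\<Sum>u\<in>{1..T}. real u * p u) + (real T + 4) * q"
    by (simp add: p_def q_def lat_prob_def pending_prob_def sum_nonneg)
  have "ennreal (latency_bound (n - 1)) = ennreal (potential i 0 (init_state n))"
    using i by (simp add: potential_def init_state_def)
  also have "\<dots> \<le> (\<Sum>u\<in>{1..T}. \<integral>\<^sup>+s. ennreal (real u * indicator {s. lat s i = Some u} s) \<partial>?G u)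
      + (\<integral>\<^sup>+s. ennreal (potential i T s) \<partial>?G T)"
    by (rule game_dist_telescope) (rule potential_le_step[OF r n])
  also have "\<dots> \<le> (\<Sum>u\<in>{1..T}. ennreal (real u * p u)) + ennreal ((real T + 4) * q)"
  proof (intro add_mono sum_mono)
    show "(\<integral>\<^sup>+s. ennreal (real u * indicator {s. lat s i = Some u} s) \<partial>?G u) \<le> ennreal (real u * p u)"
      for u
      by (simp add: nn_integral_measure_pmf_scaled_indicator p_def lat_prob_def)
    have "(\<integral>\<^sup>+s. ennreal (potential i T s) \<partial>?G T) \<le>
        (\<integral>\<^sup>+s. ennreal ((real T + 4) * indicator {s. i \<in> pending s} s) \<partial>?G T)"
      by (intro nn_integral_mono ennreal_leI) (simp add: potential_def latency_bound_le_4 indicator_def)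
    then show "(\<integral>\<^sup>+s. ennreal (potential i T s) \<partial>?G T) \<le> ennreal ((real T + 4) * q)"
      by (simp add: nn_integral_measure_pmf_scaled_indicator q_def pending_prob_def)
  qed
  also have "\<dots> = ennreal ((\<Sum>u\<in>{1..T}. real u * p u) + (real T + 4) * q)"
    by (simp add: p_def q_def lat_prob_def pending_prob_def sum_nonneg)
  finally have "latency_bound (n - 1) \<le> (\<Sum>u\<in>{1..T}. real u * p u) + (real T + 4) * q"
    using nonneg by (simp only: ennreal_le_iff)
  moreover have "q = 1 - (\<Sum>t\<le>T. p t)"
    using pending_prob_add_lat_prob[OF i, of "f2_profile i r" T]
    by (simp add: p_def q_def atMost_atLeast0 sum.atLeast_Suc_atMost lat_prob_0)
  moreover have "(\<Sum>u\<in>{1..T}. real u * p u) = (\<Sum>t\<le>T. real t * p t)"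
    by (simp add: atMost_atLeast0 sum.atLeast_Suc_atMost)
  ultimately show ?thesis
    by simp
qed

lemma mean_ge_of_truncated_bounds:
  fixes p :: "nat \<Rightarrow> real"
  assumes nonneg: "\<And>t. 0 \<le> p t" and total: "p sums 1" and mean: "summable (\<lambda>t. real t * p t)"
    and bound: "\<And>T. c \<le> (\<Sum>t\<le>T. real t * p t) + (real T + C) * (1 - (\<Sum>t\<le>T. p t))"
  shows "c \<le> (\<Sum>t. real t * p t)"
proof -
  define S where "S = (\<Sum>t. real t * p t)"
  have tail_le: "real T * (1 - (\<Sum>t\<le>T. p t)) \<le> S - (\<Sum>t\<le>T. real t * p t)" for T
  proof -
    have "1 - (\<Sum>t\<le>T. p t) = (\<Sum>k. p (k + Suc T))"
      using suminf_minus_initial_segment[OF sums_summable[OF total], of "Suc T"] sums_unique[OF total]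
      by (simp add: lessThan_Suc_atMost)
    moreover have "S - (\<Sum>t\<le>T. real t * p t) = (\<Sum>k. real (k + Suc T) * p (k + Suc T))"
      using suminf_minus_initial_segment[OF mean, of "Suc T"] by (simp add: S_def lessThan_Suc_atMost)
    moreover have "real T * (\<Sum>k. p (k + Suc T)) \<le> (\<Sum>k. real (k + Suc T) * p (k + Suc T))"
    proof -
      have tail: "summable (\<lambda>k. p (k + Suc T))"
        using sums_summable[OF total] by (rule summable_ignore_initial_segment)
      have "summable (\<lambda>k. real (k + Suc T) * p (k + Suc T))"
        using summable_ignore_initial_segment[OF mean, of "Suc T"] by simp
      then have "(\<Sum>k. real T * p (k + Suc T)) \<le> (\<Sum>k. real (k + Suc T) * p (k + Suc T))"
        using tail nonneg by (intro suminf_le summable_mult) (auto intro: mult_right_mono)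
      then show ?thesis
        using suminf_mult[OF tail] by simp
    qed
    ultimately show ?thesis
      by simp
  qed
  have "c \<le> S + C * (1 - (\<Sum>t\<le>T. p t))" for T
    using bound[of T] tail_le[of T] by (simp add: algebra_simps)
  moreover have "(\<lambda>T. S + C * (1 - (\<Sum>t\<le>T. p t))) \<longlonglongrightarrow> S + C * (1 - 1)"
  proof -
    have "(\<lambda>T. \<Sum>t<Suc T. p t) \<longlonglongrightarrow> 1"
      using total unfolding sums_def by (rule LIMSEQ_Suc)
    then show ?thesis
      by (intro tendsto_intros) (simp add: lessThan_Suc_atMost)
  qed
  ultimately show ?thesis
    unfolding S_def by (intro LIMSEQ_le_const) auto
qed

lemma expected_latency_ge:
  assumes "\<And>T. c \<le> (\<Sum>t\<le>T. real t * lat_prob n prof i t) + (real T + C) * (1 - (\<Sum>t\<le>T. lat_prob n prof i t))"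
  shows "ennreal c \<le> expected_latency n prof i"
proof -
  let ?p = "lat_prob n prof i"
  have p_nonneg: "0 \<le> ?p t" and w_nonneg: "0 \<le> real t * ?p t" for t
    by (simp_all add: lat_prob_def)
  show ?thesis
  proof (cases "(\<Sum>t. ennreal (?p t)) = 1 \<and> (\<Sum>t. ennreal (real t * ?p t)) \<noteq> \<top>")
    case False
    then show ?thesis
      by (auto simp: expected_latency_def)
  next
    case True
    have sp: "summable ?p"
      using True by (intro summable_suminf_not_top[OF p_nonneg]) simp
    have sw: "summable (\<lambda>t. real t * ?p t)"
      using True by (intro summable_suminf_not_top[OF w_nonneg]) simp
    have total: "?p sums 1"
      using True suminf_ennreal2[OF p_nonneg sp] summable_sums[OF sp] by simp
    have "c \<le> (\<Sum>t. real t * ?p t)"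
      using p_nonneg total sw assms by (rule mean_ge_of_truncated_bounds)
    moreover have "expected_latency n prof i = ennreal (\<Sum>t. real t * ?p t)"
      using True suminf_ennreal2[OF w_nonneg sw] by (simp add: expected_latency_def)
    ultimately show ?thesis
      by (simp add: ennreal_leI)
  qed
qed

theorem lemma5:
  fixes n i :: nat and r :: protocol
  assumes "2 \<le> n" and "n \<le> 4" and "i < n"
    and "valid_protocol 2 r"
    and "r \<notin> G_f2 n i"
  shows "expected_latency n (\<lambda>j. if j = i then r else f2) i \<ge> ennreal (2 ^ n / real n)"
proof -
  have "latency_bound (n - 1) = 2 ^ n / real n"
    using assms(1,2) by (auto simp: latency_bound_def le_Suc_eq numeral_eq_Suc)
  then show ?thesis
    using latency_bound_le_truncated_mean[OF assms(4,2,3)]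
    by (intro expected_latency_ge) auto
qed

end
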